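(* Assume that for every packing $\mathcal{F}$ of unit balls in $\mathbb{E}^3$ containing $\mathbf{B}$, with $\mathbf{P}$ the Voronoi cell of $\mathcal{F}$ assigned to $\mathbf{B}$, one has $\frac{\mathrm{vol}_3(\mathbf{B})}{\mathrm{vol}_3(\mathbf{P}\cap\sqrt2\,\mathbf{B})}<0.7547$. Then for every packing $\{\mathbf{c}_1+\mathbf{B},\dots,\mathbf{c}_n+\mathbf{B}\}$ of $n\ge1$ unit balls in $\mathbb{E}^3$ and $\hat r:=1.58731$, $$\frac{n\,\mathrm{vol}_3(\mathbf{B})}{\mathrm{vol}_3\left(\bigcup_{i=1}^n(\mathbf{c}_i+\hat r\mathbf{B})\right)}<0.7547.$$
   Context: $\mathbf{B}$ is the closed unit ball centered at the origin of $\mathbb{E}^3$; a packing means pairwise disjoint interiors. The Voronoi cell assigned to a ball of the packing is the set of points at least as close to its center as to any other center of the packing. *)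

theory Defs
  imports "HOL-Analysis.Analysis"
begin

text \<open>A packing of unit balls in E^3, given by its set of centers: the closed unit
balls c + B (c in C) have pairwise disjoint interiors, i.e. distinct centers are
at distance at least 2.\<close>
definition unit_ball_packing :: "(real^3) set \<Rightarrow> bool" where
  "unit_ball_packing C \<longleftrightarrow> (\<forall>c\<in>C. \<forall>d\<in>C. c \<noteq> d \<longrightarrow>
      interior (cball c 1) \<inter> interior (cball d 1) = {})"

definition voronoi_cell :: "(real^3) set \<Rightarrow> real^3 \<Rightarrow> (real^3) set" where
  "voronoi_cell C c = {x. \<forall>d\<in>C. dist x c \<le> dist x d}"

definition vol3 :: "(real^3) set \<Rightarrow> real" where
  "vol3 S = measure lebesgue S"

end

theory Submission
  imports Defs
begin

(* Truncate the Voronoi cell of every ball c + B of the packing C to the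
   ball c + rho B, rho >= 1.  Each truncated cell W c contains c + B (two centers are at
   distance >= 2), is a translate of the truncated cell of the translated packing
   C - c at the origin, so the hypothesis yields vol B < delta * vol (W c).  Distinct
   Voronoi cells meet only in a bisector hyperplane, hence the W c are almost disjoint and
   vol (Union W c) is the sum of their volumes; summing over C gives
   n vol B < delta vol (Union W c).  Finally W c lies in c + R B for R >= rho. *)

lemma unit_ball_packing_iff_dist:
  "unit_ball_packing C \<longleftrightarrow> (\<forall>c\<in>C. \<forall>d\<in>C. c \<noteq> d \<longrightarrow> 2 \<le> dist c d)"
proof -
  have "ball c 1 \<inter> ball d 1 = {} \<longleftrightarrow> 2 \<le> dist c d" for c d :: "real^3"
  proof
    assume disj: "ball c 1 \<inter> ball d 1 = {}"
    show "2 \<le> dist c d"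
    proof (rule ccontr)
      assume "\<not> 2 \<le> dist c d"
      hence "midpoint c d \<in> ball c 1 \<inter> ball d 1"
        by (simp add: dist_midpoint)
      with disj show False by blast
    qed
  next
    assume "2 \<le> dist c d"
    thus "ball c 1 \<inter> ball d 1 = {}" by (intro disjoint_ballI) simp
  qed
  thus ?thesis unfolding unit_ball_packing_def by simp
qed

lemma unit_ball_packing_translate:
  assumes "unit_ball_packing C"
  shows "unit_ball_packing ((\<lambda>d. d - a) ` C)"
  using assms unfolding unit_ball_packing_iff_dist by (simp add: dist_norm)

lemma voronoi_cell_translate:
  "voronoi_cell C c \<inter> cball c r =
     (+) c ` (voronoi_cell ((\<lambda>d. d - c) ` C) 0 \<inter> cball 0 r)"
proof -
  have dist_shift: "dist (x - c) (d - c) = dist x d" for x d :: "real^3"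
    by (simp add: dist_norm)
  have shift: "x \<in> voronoi_cell C c \<inter> cball c r \<longleftrightarrow>
      x - c \<in> voronoi_cell ((\<lambda>d. d - c) ` C) 0 \<inter> cball 0 r" for x
    using dist_shift[of x c] unfolding voronoi_cell_def by (simp add: dist_shift dist_commute)
  have "x \<in> (+) c ` S \<longleftrightarrow> x - c \<in> S" for x S
    by (auto simp: image_iff algebra_simps intro: bexI[of _ "x - c"])
  with shift show ?thesis by blast
qed

text \<open>A truncated Voronoi cell is compact, hence Lebesgue measurable with finite measure.\<close>
lemma truncated_voronoi_cell_lmeasurable:
  "voronoi_cell C c \<inter> cball c r \<in> lmeasurable"
proof -
  have "voronoi_cell C c = (\<Inter>d\<in>C. {x. dist x c \<le> dist x d})"
    unfolding voronoi_cell_def by auto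
  moreover have "closed {x. dist x c \<le> dist x d}" for d :: "real^3"
    by (intro closed_Collect_le continuous_intros)
  ultimately have "closed (voronoi_cell C c)" by auto
  thus ?thesis by (intro lmeasurable_compact closed_Int_compact) auto
qed

lemma unit_ball_subset_voronoi_cell:
  assumes "unit_ball_packing C" and "c \<in> C"
  shows "cball c 1 \<subseteq> voronoi_cell C c"
proof
  fix x assume "x \<in> cball c 1"
  hence near: "dist c x \<le> 1" by simp
  have "dist x c \<le> dist x d" if "d \<in> C" for d
  proof (cases "d = c")
    case False
    hence "2 \<le> dist c d"
      using assms that by (simp add: unit_ball_packing_iff_dist)
    moreover have "dist c d \<le> dist c x + dist x d" by (rule dist_triangle)
    ultimately show ?thesis using near dist_commute[of x c] by linarith
  qed simp
  thus "x \<in> voronoi_cell C c" unfolding voronoi_cell_def by simp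
qed

lemma vol3_unit_ball_translate: "vol3 (cball c 1) = vol3 (cball (0::real^3) 1)"
  unfolding vol3_def by (metis cball_translation measure_translation add.right_neutral)

lemma vol3_unit_ball_pos: "0 < vol3 (cball (0::real^3) 1)"
  unfolding vol3_def by simp

text \<open>Distinct Voronoi cells overlap only in the bisector hyperplane of their centers.\<close>
lemma voronoi_cells_overlap_negligible:
  assumes "c \<in> C" and "d \<in> C" and "c \<noteq> d"
  shows "negligible (voronoi_cell C c \<inter> voronoi_cell C d)"
proof -
  have "voronoi_cell C c \<inter> voronoi_cell C d \<subseteq> {x. (2 *\<^sub>R (d - c)) \<bullet> x = d \<bullet> d - c \<bullet> c}"
  proof
    fix x assume "x \<in> voronoi_cell C c \<inter> voronoi_cell C d"
    hence "dist x c = dist x d"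
      using assms unfolding voronoi_cell_def by (auto intro: antisym)
    hence "norm (x - c)^2 = norm (x - d)^2" by (simp add: dist_norm)
    thus "x \<in> {x. (2 *\<^sub>R (d - c)) \<bullet> x = d \<bullet> d - c \<bullet> c}"
      by (simp add: power2_norm_eq_inner inner_commute algebra_simps)
  qed
  moreover have "negligible {x. (2 *\<^sub>R (d - c)) \<bullet> x = d \<bullet> d - c \<bullet> c}"
    using assms(3) by (intro negligible_hyperplane) simp
  ultimately show ?thesis using negligible_subset by blast
qed

lemma vol3_union_truncated_voronoi_cells:
  assumes "finite C"
  shows "vol3 (\<Union>c\<in>C. voronoi_cell C c \<inter> cball c r) =
           (\<Sum>c\<in>C. vol3 (voronoi_cell C c \<inter> cball c r))"
proof -
  have "negligible ((voronoi_cell C c \<inter> cball c r) \<inter> (voronoi_cell C d \<inter> cball d r))"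
    if "c \<in> C" "d \<in> C" "c \<noteq> d" for c d
    using voronoi_cells_overlap_negligible[OF that] by (rule negligible_subset) blast
  hence "pairwise (\<lambda>c d. negligible ((voronoi_cell C c \<inter> cball c r) \<inter>
                                     (voronoi_cell C d \<inter> cball d r))) C"
    unfolding pairwise_def by blast
  with assms show ?thesis unfolding vol3_def
    by (intro measure_negligible_finite_Union_image truncated_voronoi_cell_lmeasurable)
qed

lemma truncated_voronoi_cell_volume_bound:
  assumes hyp: "\<And>F. unit_ball_packing F \<Longrightarrow> 0 \<in> F \<Longrightarrow>
      vol3 (cball 0 1) / vol3 (voronoi_cell F 0 \<inter> cball 0 \<rho>) < \<delta>"
    and "1 \<le> \<rho>" and "unit_ball_packing C" and "c \<in> C"
  shows "vol3 (cball 0 1) < \<delta> * vol3 (voronoi_cell C c \<inter> cball c \<rho>)"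
proof -
  define F where "F = (\<lambda>d. d - c) ` C"
  define w where "w = vol3 (voronoi_cell C c \<inter> cball c \<rho>)"
  have "unit_ball_packing F" unfolding F_def using assms(3) by (rule unit_ball_packing_translate)
  moreover have "0 \<in> F" unfolding F_def using assms(4) by (intro image_eqI[where x = c]) simp_all
  ultimately have "vol3 (cball 0 1) / vol3 (voronoi_cell F 0 \<inter> cball 0 \<rho>) < \<delta>" by (rule hyp)
  moreover have "w = vol3 (voronoi_cell F 0 \<inter> cball 0 \<rho>)"
    unfolding w_def vol3_def F_def voronoi_cell_translate[of C c \<rho>] by (rule measure_translation)
  ultimately have ratio: "vol3 (cball 0 1) / w < \<delta>" by simp
  have "cball c 1 \<subseteq> voronoi_cell C c \<inter> cball c \<rho>"
    using unit_ball_subset_voronoi_cell[OF assms(3,4)] subset_cball[OF assms(2)] by (rule Int_greatest)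
  hence "vol3 (cball c 1) \<le> w"
    unfolding w_def vol3_def
    by (rule measure_mono_fmeasurable[OF _ _ truncated_voronoi_cell_lmeasurable]) simp
  hence "vol3 (cball 0 1) \<le> w" using vol3_unit_ball_translate[of c] by simp
  hence "0 < w" using vol3_unit_ball_pos by linarith
  with ratio show ?thesis unfolding w_def by (simp add: pos_divide_less_eq)
qed

theorem packing_density_from_voronoi_bound:
  assumes hyp: "\<And>F. unit_ball_packing F \<Longrightarrow> 0 \<in> F \<Longrightarrow>
      vol3 (cball 0 1) / vol3 (voronoi_cell F 0 \<inter> cball 0 \<rho>) < \<delta>"
    and "1 \<le> \<rho>" and "\<rho> \<le> R" and "0 \<le> \<delta>"
    and "finite C" and "C \<noteq> {}" and "unit_ball_packing C"
  shows "real (card C) * vol3 (cball (0::real^3) 1) / vol3 (\<Union>c\<in>C. cball c R) < \<delta>"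
proof -
  define W where "W = (\<Union>c\<in>C. voronoi_cell C c \<inter> cball c \<rho>)"
  define U where "U = (\<Union>c\<in>C. cball c R)"
  have "real (card C) * vol3 (cball 0 1) = (\<Sum>c\<in>C. vol3 (cball 0 1))" by simp
  also have "\<dots> < (\<Sum>c\<in>C. \<delta> * vol3 (voronoi_cell C c \<inter> cball c \<rho>))"
    using assms(2,5-7) by (intro sum_strict_mono truncated_voronoi_cell_volume_bound[OF hyp]) auto
  also have "\<dots> = \<delta> * vol3 W"
    unfolding W_def vol3_union_truncated_voronoi_cells[OF assms(5)] by (simp add: sum_distrib_left)
  also have "\<dots> \<le> \<delta> * vol3 U"
  proof -
    have "W \<subseteq> U" unfolding W_def U_def using assms(3) by auto
    moreover have "W \<in> lmeasurable" "U \<in> lmeasurable" unfolding W_def U_def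
      using assms(5) truncated_voronoi_cell_lmeasurable by auto
    ultimately show ?thesis unfolding vol3_def
      using assms(4) by (intro mult_left_mono measure_mono_fmeasurable) auto
  qed
  finally have lt: "real (card C) * vol3 (cball 0 1) < \<delta> * vol3 U" .
  moreover have "0 \<le> real (card C) * vol3 (cball 0 1)" using vol3_unit_ball_pos by simp
  with lt have "0 < \<delta> * vol3 U" by linarith
  hence "0 < vol3 U" using assms(4) by (simp add: zero_less_mult_iff)
  ultimately show ?thesis unfolding U_def by (simp add: divide_less_eq mult.commute)
qed

theorem mainTheorem13:
  assumes hyp: "\<And>F :: (real^3) set. unit_ball_packing F \<Longrightarrow> 0 \<in> F \<Longrightarrow>
      vol3 (cball 0 1) / vol3 (voronoi_cell F 0 \<inter> cball 0 (sqrt 2)) < 0.7547"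
    and "finite C" and "C \<noteq> {}" and "unit_ball_packing C"
  shows "real (card C) * vol3 (cball (0::real^3) 1) /
           vol3 (\<Union>c\<in>C. cball c 1.58731) < 0.7547"
proof (rule packing_density_from_voronoi_bound[OF hyp _ _ _ assms(2-4)])
  show "1 \<le> sqrt (2::real)" by simp
  show "sqrt 2 \<le> (1.58731::real)"
    by (rule real_le_lsqrt) (simp_all add: power2_eq_square)
  show "0 \<le> (0.7547::real)" by simp
qed

end
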